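(* Let $0<L<M$, $\mathcal{M}=\left]L,M\right[$, and let $\mu$ be a non-atomic finite Borel measure on $[L,M]$ with total mass $\mu([L,M])=M-L$. Then there exists a constant $C_0>0$ such that for every $u\in\mathcal{D}(\mathcal{M})$, $$\|u\|_{L^2_\mu(\mathcal{M})}\le C_0\,\Big\|x\,\frac{\partial u}{\partial x}\Big\|_{L^2(\mathcal{M})}.$$
   Context: $\mathcal{D}(\mathcal{M})$ is the space of smooth functions with compact support in $\mathcal{M}$; $\|u\|_{L^2_\mu(\mathcal{M})}=(\int_L^M u^2\,d\mu)^{1/2}$ and $\|\cdot\|_{L^2(\mathcal{M})}$ is the $L^2$ norm for Lebesgue measure on $\mathcal{M}$. *)

theory Defs
  imports "HOL-Analysis.Analysis"
begin

definition smooth_fun :: "(real \<Rightarrow> real) \<Rightarrow> bool" where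
  "smooth_fun u \<longleftrightarrow> (\<forall>k x. ((deriv ^^ k) u) differentiable (at x))"

definition test_fun :: "real \<Rightarrow> real \<Rightarrow> (real \<Rightarrow> real) \<Rightarrow> bool" where
  "test_fun L M u \<longleftrightarrow> smooth_fun u \<and> compact (closure {x. u x \<noteq> 0})
      \<and> closure {x. u x \<noteq> 0} \<subseteq> {L<..<M}"

end

theory Submission
  imports Defs
begin

text \<open>A test function u vanishes at L, so u(x) is the integral of u' over [L, x]; by Cauchy-Schwarz,
  u(x)^2 is at most (M - L) times the integral of u'^2 over [L, M], and since t \<ge> L > 0 there,
  that integral is at most 1/L^2 times the integral of (t u'(t))^2. Integrating this uniform bound
  against \<mu>, whose total mass is M - L, gives the inequality with C0 = (M - L) / L.\<close>

lemma square_integral_le_length_mult_integral_square: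
  fixes f :: "real \<Rightarrow> real"
  assumes "a \<le> b" and f: "continuous_on {a..b} f"
  shows "(integral {a..b} f)\<^sup>2 \<le> (b - a) * integral {a..b} (\<lambda>t. (f t)\<^sup>2)"
proof (cases "a = b")
  case False
  with \<open>a \<le> b\<close> have "0 < b - a" by simp
  define F where "F = integral {a..b} f"
  define F2 where "F2 = integral {a..b} (\<lambda>t. (f t)\<^sup>2)"
  define c where "c = F / (b - a)"
  have int_f: "f integrable_on {a..b}" and int_f2: "(\<lambda>t. (f t)\<^sup>2) integrable_on {a..b}"
    using f by (auto intro: integrable_continuous_real continuous_on_power)
  \<comment> \<open>the variance of f around its mean c is nonnegative\<close>
  have "0 \<le> integral {a..b} (\<lambda>t. (f t - c)\<^sup>2)"
    using f by (intro integral_nonneg integrable_continuous_real continuous_intros) auto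
  also have "integral {a..b} (\<lambda>t. (f t - c)\<^sup>2)
      = integral {a..b} (\<lambda>t. ((f t)\<^sup>2 - 2 * c * f t) + c\<^sup>2)"
    by (rule integral_cong) (simp add: power2_eq_square algebra_simps)
  also have "\<dots> = F2 - 2 * c * F + c\<^sup>2 * (b - a)"
  proof -
    have int_cf: "(\<lambda>t. 2 * c * f t) integrable_on {a..b}"
      using f by (intro integrable_continuous_real continuous_intros)
    have "integral {a..b} (\<lambda>t. ((f t)\<^sup>2 - 2 * c * f t) + c\<^sup>2)
        = integral {a..b} (\<lambda>t. (f t)\<^sup>2 - 2 * c * f t) + integral {a..b} (\<lambda>t. c\<^sup>2)"
      using int_f2 int_cf by (intro integral_add integrable_diff) auto
    then show ?thesis
      using integral_diff[OF int_f2 int_cf] \<open>a \<le> b\<close> by (simp add: F_def F2_def)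
  qed
  also have "\<dots> = F2 - F\<^sup>2 / (b - a)"
  proof -
    have "2 * (F / d) * F - (F / d)\<^sup>2 * d = F\<^sup>2 / d" if "d \<noteq> 0" for d :: real
      using that by (simp add: field_simps power2_eq_square)
    from this[of "b - a"] show ?thesis
      using \<open>0 < b - a\<close> unfolding c_def by linarith
  qed
  finally show ?thesis
    using \<open>0 < b - a\<close> by (simp add: F_def F2_def field_simps)
qed simp

lemma square_le_integral_square_deriv:
  fixes u D :: "real \<Rightarrow> real"
  assumes x: "a \<le> x" "x \<le> b" and "u a = 0"
    and u: "\<And>t. t \<in> {a..b} \<Longrightarrow> (u has_real_derivative D t) (at t within {a..b})"
    and D: "continuous_on {a..b} D"
  shows "(u x)\<^sup>2 \<le> (b - a) * integral {a..b} (\<lambda>t. (D t)\<^sup>2)"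
proof -
  have D': "continuous_on {a..x} D"
    by (rule continuous_on_subset[OF D]) (use x in auto)
  have int_D2: "(\<lambda>t. (D t)\<^sup>2) integrable_on {a..c}" if "c \<le> b" for c
    using that by (intro integrable_continuous_real continuous_on_power continuous_on_subset[OF D]) auto
  have "(D has_integral u x - u a) {a..x}"
    using x by (intro fundamental_theorem_of_calculus)
      (auto simp: has_real_derivative_iff_has_vector_derivative[symmetric]
        intro: has_field_derivative_subset[OF u])
  then have "u x = integral {a..x} D"
    using \<open>u a = 0\<close> by (simp add: integral_unique)
  then have "(u x)\<^sup>2 \<le> (x - a) * integral {a..x} (\<lambda>t. (D t)\<^sup>2)"
    using square_integral_le_length_mult_integral_square[OF x(1) D'] by simp
  also have "\<dots> \<le> (b - a) * integral {a..b} (\<lambda>t. (D t)\<^sup>2)"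
    using x int_D2[OF x(2)] int_D2[OF order_refl]
    by (intro mult_mono integral_subset_le integral_nonneg) auto
  finally show ?thesis .
qed

lemma integral_square_le_weighted_integral_square:
  fixes D :: "real \<Rightarrow> real"
  assumes "0 < a" and D: "continuous_on {a..b} D"
  shows "a\<^sup>2 * integral {a..b} (\<lambda>t. (D t)\<^sup>2) \<le> integral {a..b} (\<lambda>t. (t * D t)\<^sup>2)"
proof -
  have "a\<^sup>2 * integral {a..b} (\<lambda>t. (D t)\<^sup>2) = integral {a..b} (\<lambda>t. a\<^sup>2 * (D t)\<^sup>2)"
    by simp
  also have "\<dots> \<le> integral {a..b} (\<lambda>t. (t * D t)\<^sup>2)"
    using D \<open>0 < a\<close>
    by (intro integral_le integrable_continuous_real continuous_intros)
      (auto simp: power_mult_distrib intro!: mult_right_mono power_mono)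
  finally show ?thesis .
qed

lemma set_integral_greaterThanLessThan_eq_integral:
  fixes f :: "real \<Rightarrow> real"
  assumes "a \<le> b" and "continuous_on {a..b} f"
  shows "(LINT x:{a<..<b}|lborel. f x) = integral {a..b} f"
proof -
  have "(LINT x:{a<..<b}|lborel. f x) = (LBINT x=a..b. f x)"
    by (simp add: interval_lebesgue_integral_def assms(1))
  also have "\<dots> = (LBINT x:{a..b}. f x)"
    using assms(1) by (rule interval_integral_Icc)
  also have "\<dots> = integral {a..b} f"
    using assms(2) by (intro set_borel_integral_eq_integral borel_integrable_atLeastAtMost')
  finally show ?thesis .
qed

lemma (in finite_measure) integral_le_const_mult_measure_space:
  fixes f :: "'a \<Rightarrow> real"
  assumes "\<And>x. x \<in> space M \<Longrightarrow> 0 \<le> f x" and "\<And>x. x \<in> space M \<Longrightarrow> f x \<le> c"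
  shows "integral\<^sup>L M f \<le> c * measure M (space M)"
  using assms integral_mono'[of M "\<lambda>_. c" f] by (fastforce simp: mult.commute)

lemma measure_space_eq_if_null_outside:
  fixes \<mu> :: "'a::topological_space measure"
  assumes "sets \<mu> = sets borel" and "S \<in> sets borel"
    and "emeasure \<mu> (- S) = 0" and "emeasure \<mu> S = ennreal c" and "0 \<le> c"
  shows "finite_measure \<mu>" and "measure \<mu> (space \<mu>) = c"
proof -
  have space: "space \<mu> = UNIV"
    using sets_eq_imp_space_eq[OF assms(1)] by simp
  have "emeasure \<mu> (space \<mu>) = emeasure \<mu> S + emeasure \<mu> (- S)"
    unfolding space using assms(1,2)
    by (subst plus_emeasure) (auto simp: Compl_eq_Diff_UNIV)
  then have "emeasure \<mu> (space \<mu>) = ennreal c"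
    using assms(3,4) by simp
  then show "finite_measure \<mu>" and "measure \<mu> (space \<mu>) = c"
    using \<open>0 \<le> c\<close> by (auto intro: finite_measureI simp: measure_def)
qed

lemma test_fun_eq_0_outside:
  assumes "test_fun L M u" and "x \<notin> {L<..<M}"
  shows "u x = 0"
  using assms closure_subset[of "{x. u x \<noteq> 0}"] by (auto simp: test_fun_def)

lemma test_fun_has_real_derivative:
  assumes "test_fun L M u"
  shows "(u has_real_derivative deriv u x) (at x)"
proof -
  have "\<And>k x. ((deriv ^^ k) u) differentiable (at x)"
    using assms by (simp add: test_fun_def smooth_fun_def)
  from this[of 0 x] show ?thesis
    by (simp add: DERIV_deriv_iff_real_differentiable)
qed

lemma test_fun_continuous_on_deriv:
  assumes "test_fun L M u"
  shows "continuous_on S (deriv u)"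
proof -
  have "\<And>x. ((deriv ^^ 1) u) differentiable (at x)"
    using assms by (simp only: test_fun_def smooth_fun_def)
  then show ?thesis
    by (auto intro!: continuous_at_imp_continuous_on differentiable_imp_continuous_within)
qed

lemma test_fun_square_le_weighted_integral:
  assumes u: "test_fun L M u" and "0 < L" and "L \<le> M"
  shows "(u x)\<^sup>2 \<le> (M - L) / L\<^sup>2 * integral {L..M} (\<lambda>t. (t * deriv u t)\<^sup>2)"
proof -
  have cont: "continuous_on {L..M} (deriv u)"
    using u by (rule test_fun_continuous_on_deriv)
  have "(u x)\<^sup>2 \<le> (M - L) * integral {L..M} (\<lambda>t. (deriv u t)\<^sup>2)"
  proof (cases "x \<in> {L<..<M}")
    case True
    have "u L = 0"
      using u by (rule test_fun_eq_0_outside) simp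
    moreover have "(u has_real_derivative deriv u t) (at t within {L..M})" for t
      using test_fun_has_real_derivative[OF u] by (rule has_field_derivative_at_within)
    ultimately show ?thesis
      using True cont by (intro square_le_integral_square_deriv) auto
  next
    case False
    have "0 \<le> integral {L..M} (\<lambda>t. (deriv u t)\<^sup>2)"
      using cont by (intro integral_nonneg integrable_continuous_real continuous_on_power) auto
    then show ?thesis
      using test_fun_eq_0_outside[OF u False] \<open>L \<le> M\<close> by simp
  qed
  also have "\<dots> \<le> (M - L) * (integral {L..M} (\<lambda>t. (t * deriv u t)\<^sup>2) / L\<^sup>2)"
    using integral_square_le_weighted_integral_square[OF \<open>0 < L\<close> cont] \<open>0 < L\<close> \<open>L \<le> M\<close>
    by (intro mult_left_mono) (simp_all add: le_divide_eq mult.commute)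
  finally show ?thesis
    by simp
qed

theorem mainTheorem5:
  fixes L M :: real and \<mu> :: "real measure"
  assumes "0 < L" "L < M"
    and "sets \<mu> = sets borel"
    and "emeasure \<mu> (- {L..M}) = 0"
    and "emeasure \<mu> {L..M} = ennreal (M - L)"
    and "\<forall>x. emeasure \<mu> {x} = 0"
  shows "\<exists>C0 > 0. \<forall>u. test_fun L M u \<longrightarrow>
           sqrt (LINT x|\<mu>. (u x)\<^sup>2)
             \<le> C0 * sqrt (LINT x:{L<..<M}|lborel. (x * deriv u x)\<^sup>2)"
proof (intro exI[of _ "(M - L) / L"] conjI allI impI)
  show "0 < (M - L) / L"
    using assms(1,2) by simp
  fix u assume u: "test_fun L M u"
  define J where "J = integral {L..M} (\<lambda>t. (t * deriv u t)\<^sup>2)"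
  have "finite_measure \<mu>" and mass: "measure \<mu> (space \<mu>) = M - L"
    using measure_space_eq_if_null_outside[OF assms(3) _ assms(4,5)] assms(2) by auto
  then have "(LINT x|\<mu>. (u x)\<^sup>2) \<le> (M - L) / L\<^sup>2 * J * measure \<mu> (space \<mu>)"
    using test_fun_square_le_weighted_integral[OF u assms(1)] assms(2)
    by (intro finite_measure.integral_le_const_mult_measure_space) (simp_all add: J_def)
  then have "sqrt (LINT x|\<mu>. (u x)\<^sup>2) \<le> sqrt (((M - L) / L)\<^sup>2 * J)"
    by (simp add: mass power2_eq_square mult_ac)
  also have "\<dots> = (M - L) / L * sqrt J"
    using assms(1,2) by (simp add: real_sqrt_mult)
  also have "J = (LINT x:{L<..<M}|lborel. (x * deriv u x)\<^sup>2)"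
    unfolding J_def using assms(2) test_fun_continuous_on_deriv[OF u]
    by (intro set_integral_greaterThanLessThan_eq_integral[symmetric] continuous_intros) auto
  finally show "sqrt (LINT x|\<mu>. (u x)\<^sup>2)
      \<le> (M - L) / L * sqrt (LINT x:{L<..<M}|lborel. (x * deriv u x)\<^sup>2)" .
qed

end
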